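(* For every $n$ there exists a dynamic graph on $n$ nodes (with integral initial loads) defined by an adaptive adversary such that no matching-based integral load balancing algorithm can reduce the maximal difference between loads in the graph below $n-1$, regardless of the running time; i.e., at every round $t$, $\max_{u,v}|w_t(u)-w_t(v)|\ge n-1$.
   Context: Integral load balancing: a fixed set of $n$ nodes with non-negative integer loads that must remain integers; the total load is preserved. The network is a dynamic graph, a sequence of connected graphs on the nodes, where the graph of each round may be chosen by an adaptive adversary after seeing everything that happened so far. In each round nodes may exchange information with all current neighbours; a matching-based algorithm is one in which, in each round, the pairs of nodes that exchange load form a matching of the current graph, and within each such pair the two nodes redistribute their combined load between them (as integers); nodes not in the matching keep their load. *)

theory Defs
  imports Main
begin

text \<open>Nodes are the naturals 0..n-1. A graph is an edge relation on nat.
  Loads are functions nat => nat (non-negative integers); only nodes < n matter.\<close>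

definition simple_graph_on :: "nat \<Rightarrow> (nat \<Rightarrow> nat \<Rightarrow> bool) \<Rightarrow> bool" where
  "simple_graph_on n E \<longleftrightarrow>
     (\<forall>u v. E u v \<longrightarrow> u < n \<and> v < n \<and> u \<noteq> v \<and> E v u)"

definition connected_graph_on :: "nat \<Rightarrow> (nat \<Rightarrow> nat \<Rightarrow> bool) \<Rightarrow> bool" where
  "connected_graph_on n E \<longleftrightarrow>
     simple_graph_on n E \<and> (\<forall>u<n. \<forall>v<n. E\<^sup>*\<^sup>* u v)"

definition is_matching :: "(nat \<Rightarrow> nat \<Rightarrow> bool) \<Rightarrow> (nat \<Rightarrow> nat \<Rightarrow> bool) \<Rightarrow> bool" where
  "is_matching E M \<longleftrightarrow>
     (\<forall>u v. M u v \<longrightarrow> E u v \<and> M v u) \<and>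
     (\<forall>u v v'. M u v \<and> M u v' \<longrightarrow> v = v')"

definition matching_step ::
  "(nat \<Rightarrow> nat \<Rightarrow> bool) \<Rightarrow> (nat \<Rightarrow> nat) \<Rightarrow> (nat \<Rightarrow> nat) \<Rightarrow> bool" where
  "matching_step E w w' \<longleftrightarrow>
     (\<exists>M. is_matching E M \<and>
          (\<forall>u. (\<nexists>v. M u v) \<longrightarrow> w' u = w u) \<and>
          (\<forall>u v. M u v \<longrightarrow> w' u + w' v = w u + w v))"

definition load_history :: "(nat \<Rightarrow> nat \<Rightarrow> nat) \<Rightarrow> nat \<Rightarrow> (nat \<Rightarrow> nat) list" where
  "load_history w t = map w [0..<Suc t]"

text \<open>An execution of some matching-based algorithm against the adaptive adversary adv
  (which maps the history of loads to the graph of the next round), from initial loads w0.\<close>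
definition execution ::
  "nat \<Rightarrow> ((nat \<Rightarrow> nat) list \<Rightarrow> (nat \<Rightarrow> nat \<Rightarrow> bool)) \<Rightarrow> (nat \<Rightarrow> nat) \<Rightarrow> (nat \<Rightarrow> nat \<Rightarrow> nat) \<Rightarrow> bool" where
  "execution n adv w0 w \<longleftrightarrow>
     w 0 = w0 \<and> (\<forall>t. matching_step (adv (load_history w t)) (w t) (w (Suc t)))"

definition discrepancy :: "nat \<Rightarrow> (nat \<Rightarrow> nat) \<Rightarrow> int" where
  "discrepancy n w = Max {int (w u) - int (w v) | u v. u < n \<and> v < n}"

end

theory Submission
  imports Defs
begin

text \<open>Start with load \<open>u\<close> on node \<open>u\<close>. The adversary keeps the invariant that, listed along some ordering \<open>\<sigma>\<close> of the nodes, the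
  loads have prefix sums at most those of the staircase \<open>0, 1, \<dots>, n - 1\<close> and the same total,
  and it always presents the path through the nodes in the order \<open>\<sigma>\<close>. A matching of a path only
  rebalances disjoint pairs of consecutive nodes; listing each pair with its smaller load first,
  the only changed prefix sum is the one ending inside a pair, and it is at most the average of
  its two neighbours, hence at most the staircase bound plus \<open>1/2\<close>, hence (being an integer) at
  most the staircase bound. The invariant forces load \<open>0\<close> on the first node and load at least
  \<open>n - 1\<close> on the last one.\<close>

definition path_graph :: "nat \<Rightarrow> (nat \<Rightarrow> nat) \<Rightarrow> nat \<Rightarrow> nat \<Rightarrow> bool" where
  "path_graph n \<sigma> u v \<longleftrightarrow>
     (\<exists>i. Suc i < n \<and> (u = \<sigma> i \<and> v = \<sigma> (Suc i) \<or> v = \<sigma> i \<and> u = \<sigma> (Suc i)))"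

definition staircase_order :: "nat \<Rightarrow> (nat \<Rightarrow> nat) \<Rightarrow> (nat \<Rightarrow> nat) \<Rightarrow> bool" where
  "staircase_order n x \<sigma> \<longleftrightarrow> bij_betw \<sigma> {..<n} {..<n} \<and>
     (\<forall>k\<le>n. (\<Sum>i<k. x (\<sigma> i)) \<le> (\<Sum>i<k. i)) \<and> (\<Sum>i<n. x (\<sigma> i)) = (\<Sum>i<n. i)"

definition swap_pairs :: "(nat \<Rightarrow> bool) \<Rightarrow> nat \<Rightarrow> nat" where
  "swap_pairs S i = (if S i then Suc i else if 0 < i \<and> S (i - 1) then i - 1 else i)"

lemma connected_path_graph:
  assumes "bij_betw \<sigma> {..<n} {..<n}"
  shows "connected_graph_on n (path_graph n \<sigma>)"
proof -
  have inj: "inj_on \<sigma> {..<n}" and img: "\<sigma> ` {..<n} = {..<n}"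
    using assms by (auto simp: bij_betw_def)
  have "simple_graph_on n (path_graph n \<sigma>)"
    unfolding simple_graph_on_def
  proof (intro allI impI)
    fix u v
    assume "path_graph n \<sigma> u v"
    then obtain i where i: "Suc i < n" "u = \<sigma> i \<and> v = \<sigma> (Suc i) \<or> v = \<sigma> i \<and> u = \<sigma> (Suc i)"
      unfolding path_graph_def by blast
    then have "\<sigma> i \<noteq> \<sigma> (Suc i)" "\<sigma> i < n" "\<sigma> (Suc i) < n"
      using inj img by (auto simp: inj_on_eq_iff)
    with i show "u < n \<and> v < n \<and> u \<noteq> v \<and> path_graph n \<sigma> v u"
      unfolding path_graph_def by auto
  qed
  moreover have from_first: "(path_graph n \<sigma>)\<^sup>*\<^sup>* (\<sigma> 0) (\<sigma> j)" if "j < n" for j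
    using that
  proof (induction j)
    case (Suc j)
    then have "path_graph n \<sigma> (\<sigma> j) (\<sigma> (Suc j))"
      unfolding path_graph_def by blast
    with Suc show ?case
      by (simp add: rtranclp.rtrancl_into_rtrancl)
  qed simp
  have "symp (path_graph n \<sigma>)"
    unfolding path_graph_def symp_def by blast
  then have "(path_graph n \<sigma>)\<^sup>*\<^sup>* u v" if "u < n" "v < n" for u v
    using that img from_first sympD[OF symp_rtranclp] rtranclp_trans
    by (metis imageE lessThan_iff)
  ultimately show ?thesis
    unfolding connected_graph_on_def by blast
qed

lemma path_graph_neighbour:
  assumes "inj_on \<sigma> {..<n}" "i < n" "path_graph n \<sigma> (\<sigma> i) v"
  shows "Suc i < n \<and> v = \<sigma> (Suc i) \<or> 0 < i \<and> v = \<sigma> (i - 1)"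
  using assms inj_onD[OF assms(1), of i] unfolding path_graph_def by fastforce

lemma path_matching_unmatched:
  assumes "inj_on \<sigma> {..<n}" "is_matching (path_graph n \<sigma>) M" "i < n"
    and "\<not> (Suc i < n \<and> M (\<sigma> i) (\<sigma> (Suc i)))" "\<not> (0 < i \<and> M (\<sigma> (i - 1)) (\<sigma> i))"
  shows "\<nexists>v. M (\<sigma> i) v"
  using assms path_graph_neighbour[OF assms(1,3)] unfolding is_matching_def by blast

lemma path_matching_disjoint_pairs:
  assumes "inj_on \<sigma> {..<n}" "is_matching (path_graph n \<sigma>) M" "Suc (Suc i) < n"
    and "M (\<sigma> i) (\<sigma> (Suc i))"
  shows "\<not> M (\<sigma> (Suc i)) (\<sigma> (Suc (Suc i)))"
proof
  assume "M (\<sigma> (Suc i)) (\<sigma> (Suc (Suc i)))"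
  moreover have "M (\<sigma> (Suc i)) (\<sigma> i)"
    using assms(2,4) unfolding is_matching_def by blast
  ultimately have "\<sigma> i = \<sigma> (Suc (Suc i))"
    using assms(2) unfolding is_matching_def by blast
  with assms(1,3) show False
    by (simp add: inj_on_eq_iff)
qed

lemma swap_pairs_involution:
  assumes "\<And>i. S i \<Longrightarrow> \<not> S (Suc i)"
  shows "swap_pairs S (swap_pairs S i) = i"
  using assms[of i] assms[of "i - 1"] unfolding swap_pairs_def by auto

lemma bij_betw_swap_pairs:
  assumes "\<And>i. S i \<Longrightarrow> \<not> S (Suc i)" "\<And>i. S i \<Longrightarrow> Suc i < n"
  shows "bij_betw (swap_pairs S) {..<n} {..<n}"
proof -
  have "swap_pairs S ` {..<n} \<subseteq> {..<n}"
    using assms(2) unfolding swap_pairs_def by auto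
  then show ?thesis
    by (intro bij_betw_byWitness[where f' = "swap_pairs S"])
      (simp_all add: swap_pairs_involution[of S, OF assms(1)])
qed

lemma sum_lessThan_eq_pairwise:
  fixes a b :: "nat \<Rightarrow> 'a::comm_monoid_add"
  assumes disjoint: "\<And>i. R i \<Longrightarrow> \<not> R (Suc i)"
    and pairs: "\<And>i. R i \<Longrightarrow> a i + a (Suc i) = b i + b (Suc i)"
    and singles: "\<And>i. i < m \<Longrightarrow> \<not> R i \<Longrightarrow> (\<forall>j. R j \<longrightarrow> Suc j \<noteq> i) \<Longrightarrow> a i = b i"
  shows "k \<le> m \<Longrightarrow> \<forall>j. R j \<longrightarrow> Suc j \<noteq> k \<Longrightarrow> (\<Sum>i<k. a i) = (\<Sum>i<k. b i)"
proof (induction k rule: less_induct)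
  case (less k)
  show ?case
  proof (cases k)
    case (Suc j)
    show ?thesis
    proof (cases "\<exists>i. R i \<and> Suc i = j")
      case True
      then obtain i where "R i" "j = Suc i" by blast
      have "\<forall>l. R l \<longrightarrow> Suc l \<noteq> i"
        using disjoint \<open>R i\<close> by blast
      then have "(\<Sum>l<i. a l) = (\<Sum>l<i. b l)"
        using less \<open>k = Suc j\<close> \<open>j = Suc i\<close> by simp
      then show ?thesis
        using pairs[OF \<open>R i\<close>] by (simp add: Suc \<open>j = Suc i\<close> add.assoc)
    next
      case False
      have "j < m" "\<not> R j"
        using less.prems Suc by auto
      then have "a j = b j"
        using singles False by blast
      moreover have "(\<Sum>l<j. a l) = (\<Sum>l<j. b l)"
        using less.IH[of j] less.prems False Suc by auto
      ultimately show ?thesis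
        by (simp add: Suc)
    qed
  qed simp
qed

lemma staircase_bound_pairwise_averaged:
  fixes a b :: "nat \<Rightarrow> nat"
  assumes staircase: "\<And>k. k \<le> n \<Longrightarrow> (\<Sum>i<k. a i) \<le> (\<Sum>i<k. i)"
    and disjoint: "\<And>i. R i \<Longrightarrow> \<not> R (Suc i)"
    and inside: "\<And>i. R i \<Longrightarrow> Suc i < n"
    and pairs: "\<And>i. R i \<Longrightarrow> a i + a (Suc i) = b i + b (Suc i)"
    and smaller_first: "\<And>i. R i \<Longrightarrow> 2 * b i \<le> a i + a (Suc i)"
    and singles: "\<And>i. i < n \<Longrightarrow> \<not> R i \<Longrightarrow> (\<forall>j. R j \<longrightarrow> Suc j \<noteq> i) \<Longrightarrow> a i = b i"
  shows "k \<le> n \<Longrightarrow> (\<Sum>i<k. b i) \<le> (\<Sum>i<k. i)"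
    and "(\<Sum>i<n. b i) = (\<Sum>i<n. a i)"
proof -
  have prefix_eq: "(\<Sum>i<k. a i) = (\<Sum>i<k. b i)" if "k \<le> n" "\<forall>j. R j \<longrightarrow> Suc j \<noteq> k" for k
    using disjoint pairs singles that by (rule sum_lessThan_eq_pairwise)
  have "\<forall>j. R j \<longrightarrow> Suc j \<noteq> n"
    using inside by blast
  then show "(\<Sum>i<n. b i) = (\<Sum>i<n. a i)"
    using prefix_eq[of n] by simp
  assume "k \<le> n"
  show "(\<Sum>i<k. b i) \<le> (\<Sum>i<k. i)"
  proof (cases "\<exists>j. R j \<and> Suc j = k")
    case True
    then obtain j where "R j" "k = Suc j" by blast
    have "\<forall>l. R l \<longrightarrow> Suc l \<noteq> j"
      using disjoint \<open>R j\<close> by blast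
    moreover have "j \<le> n"
      using \<open>k \<le> n\<close> \<open>k = Suc j\<close> by simp
    ultimately have "(\<Sum>i<j. b i) = (\<Sum>i<j. a i)"
      using prefix_eq[of j] by simp
    moreover have "(\<Sum>i<j. a i) \<le> (\<Sum>i<j. i)"
      using staircase[of j] \<open>j \<le> n\<close> by simp
    moreover have "(\<Sum>i<Suc (Suc j). a i) \<le> (\<Sum>i<Suc (Suc j). i)"
      using staircase[of "Suc (Suc j)"] inside[OF \<open>R j\<close>] by simp
    \<comment> \<open>these give the staircase bound plus \<open>1/2\<close>; integrality removes the \<open>1/2\<close>\<close>
    ultimately show ?thesis
      using smaller_first[OF \<open>R j\<close>] \<open>k = Suc j\<close> by simp
  next
    case False
    then have "\<forall>j. R j \<longrightarrow> Suc j \<noteq> k"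
      by blast
    then have "(\<Sum>i<k. b i) = (\<Sum>i<k. a i)"
      using prefix_eq[of k] \<open>k \<le> n\<close> by simp
    with staircase[OF \<open>k \<le> n\<close>] show ?thesis
      by simp
  qed
qed

text \<open>\<open>R\<close> marks the matched pairs of consecutive positions of the path; \<open>\<sigma>'\<close> lists every matched
  pair with its smaller new load first.\<close>

lemma path_matching_step_sorted_pairs:
  assumes bij: "bij_betw \<sigma> {..<n} {..<n}" and step: "matching_step (path_graph n \<sigma>) x y"
  obtains \<sigma>' R where "bij_betw \<sigma>' {..<n} {..<n}"
    and "\<And>i. R i \<Longrightarrow> \<not> R (Suc i)" and "\<And>i. R i \<Longrightarrow> Suc i < n"
    and "\<And>i. R i \<Longrightarrow> x (\<sigma> i) + x (\<sigma> (Suc i)) = y (\<sigma>' i) + y (\<sigma>' (Suc i))"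
    and "\<And>i. R i \<Longrightarrow> 2 * y (\<sigma>' i) \<le> x (\<sigma> i) + x (\<sigma> (Suc i))"
    and "\<And>i. i < n \<Longrightarrow> \<not> R i \<Longrightarrow> \<forall>j. R j \<longrightarrow> Suc j \<noteq> i \<Longrightarrow> x (\<sigma> i) = y (\<sigma>' i)"
proof -
  obtain M where M: "is_matching (path_graph n \<sigma>) M"
    and keep: "\<And>u. \<nexists>v. M u v \<Longrightarrow> y u = x u"
    and sums: "\<And>u v. M u v \<Longrightarrow> y u + y v = x u + x v"
    using step unfolding matching_step_def by blast
  have inj: "inj_on \<sigma> {..<n}"
    using bij by (rule bij_betw_imp_inj_on)
  define R where "R i \<longleftrightarrow> Suc i < n \<and> M (\<sigma> i) (\<sigma> (Suc i))" for i
  define S where "S i \<longleftrightarrow> R i \<and> y (\<sigma> (Suc i)) < y (\<sigma> i)" for i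
  define \<sigma>' where "\<sigma>' = \<sigma> \<circ> swap_pairs S"
  have disjoint: "\<not> R (Suc i)" if "R i" for i
    using that path_matching_disjoint_pairs[OF inj M] unfolding R_def by blast
  have inside: "Suc i < n" if "R i" for i
    using that unfolding R_def by simp
  have bij': "bij_betw \<sigma>' {..<n} {..<n}"
    unfolding \<sigma>'_def
    by (rule bij_betw_trans[OF bij_betw_swap_pairs bij]) (use disjoint inside in \<open>auto simp: S_def\<close>)
  have pairs: "x (\<sigma> i) + x (\<sigma> (Suc i)) = y (\<sigma>' i) + y (\<sigma>' (Suc i))"
    and smaller_first: "2 * y (\<sigma>' i) \<le> x (\<sigma> i) + x (\<sigma> (Suc i))" if "R i" for i
    using that disjoint[of i] disjoint[of "i - 1"] sums[of "\<sigma> i" "\<sigma> (Suc i)"]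
    unfolding \<sigma>'_def swap_pairs_def S_def R_def by auto
  have singles: "x (\<sigma> i) = y (\<sigma>' i)" if "i < n" "\<not> R i" "\<forall>j. R j \<longrightarrow> Suc j \<noteq> i" for i
  proof -
    have "swap_pairs S i = i"
      using that unfolding swap_pairs_def S_def by (cases i) auto
    moreover have "\<nexists>v. M (\<sigma> i) v"
      using path_matching_unmatched[OF inj M \<open>i < n\<close>] that unfolding R_def by (cases i) auto
    ultimately show ?thesis
      using keep unfolding \<sigma>'_def by simp
  qed
  show ?thesis
    using bij' disjoint inside pairs smaller_first singles by (rule that)
qed

lemma staircase_order_step:
  assumes stair: "staircase_order n x \<sigma>" and step: "matching_step (path_graph n \<sigma>) x y"
  shows "\<exists>\<sigma>'. staircase_order n y \<sigma>'"
proof -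
  have bij: "bij_betw \<sigma> {..<n} {..<n}"
    and staircase: "\<And>k. k \<le> n \<Longrightarrow> (\<Sum>i<k. x (\<sigma> i)) \<le> (\<Sum>i<k. i)"
    and total: "(\<Sum>i<n. x (\<sigma> i)) = (\<Sum>i<n. i)"
    using stair unfolding staircase_order_def by blast+
  obtain \<sigma>' R where bij': "bij_betw \<sigma>' {..<n} {..<n}"
    and pairing: "\<And>i. R i \<Longrightarrow> \<not> R (Suc i)" "\<And>i. R i \<Longrightarrow> Suc i < n"
      "\<And>i. R i \<Longrightarrow> x (\<sigma> i) + x (\<sigma> (Suc i)) = y (\<sigma>' i) + y (\<sigma>' (Suc i))"
      "\<And>i. R i \<Longrightarrow> 2 * y (\<sigma>' i) \<le> x (\<sigma> i) + x (\<sigma> (Suc i))"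
      "\<And>i. i < n \<Longrightarrow> \<not> R i \<Longrightarrow> \<forall>j. R j \<longrightarrow> Suc j \<noteq> i \<Longrightarrow> x (\<sigma> i) = y (\<sigma>' i)"
    using path_matching_step_sorted_pairs[OF bij step] by blast
  have "(\<Sum>i<k. y (\<sigma>' i)) \<le> (\<Sum>i<k. i)" if "k \<le> n" for k
    using staircase pairing that by (rule staircase_bound_pairwise_averaged(1))
  moreover have "(\<Sum>i<n. y (\<sigma>' i)) = (\<Sum>i<n. x (\<sigma> i))"
    using staircase pairing by (rule staircase_bound_pairwise_averaged(2))
  ultimately have "staircase_order n y \<sigma>'"
    using bij' total unfolding staircase_order_def by simp
  then show ?thesis
    by blast
qed

lemma staircase_order_identity: "staircase_order n (\<lambda>u. u) id"
  unfolding staircase_order_def by simp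

lemma discrepancy_ge:
  assumes "u < n" "v < n"
  shows "int (w u) - int (w v) \<le> discrepancy n w"
proof -
  have "finite {int (w u) - int (w v) | u v. u < n \<and> v < n}"
    by (rule finite_image_set2) auto
  then show ?thesis
    unfolding discrepancy_def using assms by (intro Max_ge) auto
qed

lemma staircase_order_discrepancy:
  assumes "staircase_order n x \<sigma>" "n \<ge> 1"
  shows "discrepancy n x \<ge> int n - 1"
proof -
  obtain m where n: "n = Suc m"
    using assms(2) by (cases n) auto
  have bij: "bij_betw \<sigma> {..<n} {..<n}"
    and staircase: "\<And>k. k \<le> n \<Longrightarrow> (\<Sum>i<k. x (\<sigma> i)) \<le> (\<Sum>i<k. i)"
    and total: "(\<Sum>i<n. x (\<sigma> i)) = (\<Sum>i<n. i)"
    using assms(1) unfolding staircase_order_def by blast+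
  have "x (\<sigma> 0) = 0"
    using staircase[of 1] n by simp
  moreover have "x (\<sigma> m) \<ge> m"
    using staircase[of m] total n by simp
  moreover have "int (x (\<sigma> m)) - int (x (\<sigma> 0)) \<le> discrepancy n x"
    using bij n by (intro discrepancy_ge) (auto simp: bij_betw_def)
  ultimately show ?thesis
    using n by simp
qed

definition staircase_adversary :: "nat \<Rightarrow> (nat \<Rightarrow> nat) list \<Rightarrow> nat \<Rightarrow> nat \<Rightarrow> bool" where
  "staircase_adversary n h =
     (if \<exists>\<sigma>. staircase_order n (last h) \<sigma>
      then path_graph n (SOME \<sigma>. staircase_order n (last h) \<sigma>) else path_graph n id)"

lemma connected_staircase_adversary: "connected_graph_on n (staircase_adversary n h)"
proof (cases "\<exists>\<sigma>. staircase_order n (last h) \<sigma>")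
  case True
  then have "staircase_order n (last h) (SOME \<sigma>. staircase_order n (last h) \<sigma>)"
    by (rule someI_ex)
  with True show ?thesis
    unfolding staircase_adversary_def staircase_order_def by (simp add: connected_path_graph)
qed (simp add: staircase_adversary_def connected_path_graph)

lemma execution_staircase_adversary:
  assumes "execution n (staircase_adversary n) (\<lambda>u. u) w"
  shows "\<exists>\<sigma>. staircase_order n (w t) \<sigma>"
proof (induction t)
  case 0
  show ?case
    using assms staircase_order_identity unfolding execution_def by auto
next
  case (Suc t)
  let ?\<sigma> = "SOME \<sigma>. staircase_order n (w t) \<sigma>"
  have "last (load_history w t) = w t"
    unfolding load_history_def by simp
  then have "matching_step (path_graph n ?\<sigma>) (w t) (w (Suc t))"
    using assms Suc.IH unfolding execution_def staircase_adversary_def by metis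
  moreover have "staircase_order n (w t) ?\<sigma>"
    using Suc.IH by (rule someI_ex)
  ultimately show ?case
    by (rule staircase_order_step[rotated])
qed

theorem theorem2:
  fixes n :: nat
  assumes "n \<ge> 1"
  shows "\<exists>(w0 :: nat \<Rightarrow> nat) (adv :: (nat \<Rightarrow> nat) list \<Rightarrow> (nat \<Rightarrow> nat \<Rightarrow> bool)).
           (\<forall>h. connected_graph_on n (adv h)) \<and>
           (\<forall>w. execution n adv w0 w \<longrightarrow> (\<forall>t. discrepancy n (w t) \<ge> int n - 1))"
  using connected_staircase_adversary execution_staircase_adversary
    staircase_order_discrepancy[OF _ assms]
  by blast

end
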